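(* Let $G=(V,E)$ be a transient, connected, simple, locally finite graph with fixed vertex $o$ and fixed rotor mechanism $(m_x)_{x\in V}$. For any initial rotor configuration $\rho$, any $n\geq1$, and any $t\geq 0$, \[ M_t(\rho,n)=n\,\frac{\mathcal{G}(o)}{\deg(o)}. \]
   Context: For $x\in V$, $\mathcal{E}_x$ is the set of outgoing directed edges $(x,y)$ with $y$ a neighbor of $x$, and $\deg(x)=|\mathcal{E}_x|$. A rotor mechanism is a choice, for each $x$, of a bijection $m_x:\mathcal{E}_x\to\mathcal{E}_x$ with exactly one orbit. A rotor configuration is a map $\rho$ with $\rho(x)\in\mathcal{E}_x$ for each $x$. $\mathcal{G}(x)$ is the expected number of visits to $x$ by simple random walk on $G$ started at $o$. Weight of a directed edge $(x,y)$: writing $(x,y_i):=m_x^i(x,y)$, \[ w(x,y):=\frac{-1}{\deg(x)}\sum_{i=0}^{\deg(x)-1} i\,\frac{\mathcal{G}(y_{i+1})}{\deg(y_{i+1})}. \] Experiment: given $\rho$ and $n\ge1$, define $X_t^{(0)},\dots,X_t^{(n-1)}$ and $\rho_t$ ($t\ge0$) by: $X_0^{(i)}=o$ for all $i$, $\rho_0=\rho$. Let $i_t:=t+1\bmod n$. Particle $i$ has returned to $o$ by time $t$ if $X_t^{(i)}=o$ and $X_s^{(i)}\ne o$ for some $s<t$. If particle $i_t$ has returned to $o$ by time $t$, then $\rho_{t+1}=\rho_t$ and all positions stay the same. Otherwise $\rho_{t+1}(x)=m_x(\rho_t(x))$ for $x=X_t^{(i_t)}$ and $\rho_{t+1}(x)=\rho_t(x)$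 otherwise; $X_{t+1}^{(i_t)}$ is the target vertex of $\rho_{t+1}(X_t^{(i_t)})$ and $X_{t+1}^{(i)}=X_t^{(i)}$ for $i\ne i_t$. Range: $R_t:=\{X_s^{(i)}: i\in\{0,\dots,n-1\},\ s\le t\}$. Define \[ M_t(\rho,n):=\sum_{i=0}^{n-1}\frac{\mathcal{G}(X_t^{(i)})}{\deg(X_t^{(i)})}+\frac{\min\{t,n\}}{\deg(o)}+\sum_{x\in R_t}\bigl(w(\rho_t(x))-w(\rho(x))\bigr). \] *)

theory Defs
  imports Complex_Main
begin

definition nbrs :: "('v \<Rightarrow> 'v \<Rightarrow> bool) \<Rightarrow> 'v \<Rightarrow> 'v set" where
  "nbrs E x = {y. E x y}"

definition out_edges :: "('v \<Rightarrow> 'v \<Rightarrow> bool) \<Rightarrow> 'v \<Rightarrow> ('v \<times> 'v) set" where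
  "out_edges E x = {(x, y) | y. E x y}"

definition deg :: "('v \<Rightarrow> 'v \<Rightarrow> bool) \<Rightarrow> 'v \<Rightarrow> nat" where
  "deg E x = card (out_edges E x)"

definition simple_graph :: "('v \<Rightarrow> 'v \<Rightarrow> bool) \<Rightarrow> bool" where
  "simple_graph E \<longleftrightarrow> (\<forall>x y. E x y \<longrightarrow> E y x) \<and> (\<forall>x. \<not> E x x)"

definition locally_finite :: "('v \<Rightarrow> 'v \<Rightarrow> bool) \<Rightarrow> bool" where
  "locally_finite E \<longleftrightarrow> (\<forall>x. finite (nbrs E x))"

definition connected_graph :: "('v \<Rightarrow> 'v \<Rightarrow> bool) \<Rightarrow> bool" where
  "connected_graph E \<longleftrightarrow> (\<forall>x y. E\<^sup>*\<^sup>* x y)"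

text \<open>n-step transition probabilities of simple random walk started at r0:
  srw_prob E r0 k y = P(X_k = y).\<close>

primrec srw_prob :: "('v \<Rightarrow> 'v \<Rightarrow> bool) \<Rightarrow> 'v \<Rightarrow> nat \<Rightarrow> 'v \<Rightarrow> real" where
  "srw_prob E r0 0 y = (if y = r0 then 1 else 0)"
| "srw_prob E r0 (Suc k) y = (\<Sum>x\<in>nbrs E y. srw_prob E r0 k x / real (deg E x))"

definition green :: "('v \<Rightarrow> 'v \<Rightarrow> bool) \<Rightarrow> 'v \<Rightarrow> 'v \<Rightarrow> real" where
  "green E r0 y = (\<Sum>k. srw_prob E r0 k y)"

definition transient :: "('v \<Rightarrow> 'v \<Rightarrow> bool) \<Rightarrow> 'v \<Rightarrow> bool" where
  "transient E r0 \<longleftrightarrow> summable (\<lambda>k. srw_prob E r0 k r0)"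

definition rotor_mechanism :: "('v \<Rightarrow> 'v \<Rightarrow> bool) \<Rightarrow> ('v \<times> 'v \<Rightarrow> 'v \<times> 'v) \<Rightarrow> bool" where
  "rotor_mechanism E m \<longleftrightarrow>
     (\<forall>x. bij_betw m (out_edges E x) (out_edges E x) \<and>
          (\<forall>e\<in>out_edges E x. \<forall>e'\<in>out_edges E x. \<exists>k. (m ^^ k) e = e'))"

definition rotor_config :: "('v \<Rightarrow> 'v \<Rightarrow> bool) \<Rightarrow> ('v \<Rightarrow> 'v \<times> 'v) \<Rightarrow> bool" where
  "rotor_config E \<rho> \<longleftrightarrow> (\<forall>x. \<rho> x \<in> out_edges E x)"

definition weight :: "('v \<Rightarrow> 'v \<Rightarrow> bool) \<Rightarrow> 'v \<Rightarrow> ('v \<times> 'v \<Rightarrow> 'v \<times> 'v) \<Rightarrow> 'v \<times> 'v \<Rightarrow> real" where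
  "weight E r0 m e =
     (-1 / real (deg E (fst e))) *
     (\<Sum>i<deg E (fst e). real i * green E r0 (snd ((m ^^ (i + 1)) e))
                                  / real (deg E (snd ((m ^^ (i + 1)) e))))"

text \<open>The experiment. A state is (positions of particles 0..n-1, rotor configuration).
  exp_hist E m r0 \<rho> n t is the list of states at times 0..t.\<close>

type_synonym 'v rstate = "(nat \<Rightarrow> 'v) \<times> ('v \<Rightarrow> 'v \<times> 'v)"

definition exp_step :: "('v \<times> 'v \<Rightarrow> 'v \<times> 'v) \<Rightarrow> 'v \<Rightarrow> nat \<Rightarrow> 'v rstate list \<Rightarrow> nat \<Rightarrow> 'v rstate" where
  "exp_step m r0 n h t =
     (let (X, r) = h ! t; i = (t + 1) mod n in
      if X i = r0 \<and> (\<exists>s<t. fst (h ! s) i \<noteq> r0) then (X, r)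
      else (let x = X i; r' = r(x := m (r x)) in (X(i := snd (r' x)), r')))"

primrec exp_hist :: "('v \<times> 'v \<Rightarrow> 'v \<times> 'v) \<Rightarrow> 'v \<Rightarrow> ('v \<Rightarrow> 'v \<times> 'v) \<Rightarrow> nat \<Rightarrow> nat \<Rightarrow> 'v rstate list" where
  "exp_hist m r0 \<rho> n 0 = [(\<lambda>_. r0, \<rho>)]"
| "exp_hist m r0 \<rho> n (Suc t) = exp_hist m r0 \<rho> n t @ [exp_step m r0 n (exp_hist m r0 \<rho> n t) t]"

definition pos :: "('v \<times> 'v \<Rightarrow> 'v \<times> 'v) \<Rightarrow> 'v \<Rightarrow> ('v \<Rightarrow> 'v \<times> 'v) \<Rightarrow> nat \<Rightarrow> nat \<Rightarrow> nat \<Rightarrow> 'v" where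
  "pos m r0 \<rho> n t i = fst (exp_hist m r0 \<rho> n t ! t) i"

definition rot :: "('v \<times> 'v \<Rightarrow> 'v \<times> 'v) \<Rightarrow> 'v \<Rightarrow> ('v \<Rightarrow> 'v \<times> 'v) \<Rightarrow> nat \<Rightarrow> nat \<Rightarrow> 'v \<Rightarrow> 'v \<times> 'v" where
  "rot m r0 \<rho> n t = snd (exp_hist m r0 \<rho> n t ! t)"

definition range_set :: "('v \<times> 'v \<Rightarrow> 'v \<times> 'v) \<Rightarrow> 'v \<Rightarrow> ('v \<Rightarrow> 'v \<times> 'v) \<Rightarrow> nat \<Rightarrow> nat \<Rightarrow> 'v set" where
  "range_set m r0 \<rho> n t = {pos m r0 \<rho> n s i | i s. i < n \<and> s \<le> t}"

definition M_val :: "('v \<Rightarrow> 'v \<Rightarrow> bool) \<Rightarrow> ('v \<times> 'v \<Rightarrow> 'v \<times> 'v) \<Rightarrow> 'v \<Rightarrow> ('v \<Rightarrow> 'v \<times> 'v) \<Rightarrow> nat \<Rightarrow> nat \<Rightarrow> real" where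
  "M_val E m r0 \<rho> n t =
     (\<Sum>i<n. green E r0 (pos m r0 \<rho> n t i) / real (deg E (pos m r0 \<rho> n t i)))
     + real (min t n) / real (deg E r0)
     + (\<Sum>x\<in>range_set m r0 \<rho> n t. weight E r0 m (rot m r0 \<rho> n t x) - weight E r0 m (\<rho> x))"

end

theory Submission
  imports Defs
begin

(* M_t is conserved step by step. Write h(y) = G(y)/deg(y); the Green function satisfies
   G(y) = [y = o] + sum of h over the neighbours of y. When a particle at x turns the rotor
   from e to m(e) and walks to y, the weights are arranged so that w(m(e)) - w(e) is the
   average of h over the neighbours of x minus h(y), while the particle sum changes by
   h(y) - h(x). Hence M changes by -[x = o]/deg(o). A particle moves from o exactly at its
   first move, i.e. during the first n steps, where the term min{t,n}/deg(o) compensates;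
   afterwards a particle found at o has returned and is frozen, so nothing changes. *)

lemma sum_fun_upd_eq:
  fixes g :: "'a \<Rightarrow> 'b \<Rightarrow> 'c::ab_group_add"
  assumes "finite A" "a \<in> A"
  shows "(\<Sum>z\<in>A. g z ((f(a := v)) z)) = (\<Sum>z\<in>A. g z (f z)) - g a (f a) + g a v"
proof -
  have "(\<Sum>z\<in>A - {a}. g z ((f(a := v)) z)) = (\<Sum>z\<in>A - {a}. g z (f z))"
    by (rule sum.cong) auto
  then show ?thesis
    using assms by (simp add: sum.remove)
qed

lemma funpow_in_invariant_set: "m ` A \<subseteq> A \<Longrightarrow> a \<in> A \<Longrightarrow> (m ^^ k) a \<in> A"
  by (induction k) auto

lemma single_orbit_funpow:
  assumes maps: "m ` A \<subseteq> A"
    and orbit: "\<forall>a\<in>A. \<forall>b\<in>A. \<exists>k. (m ^^ k) a = b"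
    and e: "e \<in> A"
  shows "(m ^^ card A) e = e" and "bij_betw (\<lambda>k. (m ^^ k) e) {..<card A} A"
proof -
  define F where "F k = (m ^^ k) e" for k
  obtain k where "(m ^^ k) (m e) = e"
    using orbit e maps by blast
  then have "F (Suc k) = e"
    unfolding F_def by (simp add: funpow_swap1)
  then have ex: "\<exists>p. 0 < p \<and> F p = e"
    by blast
  define p where "p = (LEAST p. 0 < p \<and> F p = e)"
  have p: "0 < p" "F p = e"
    unfolding p_def using LeastI_ex[OF ex] by auto
  have "q < p \<Longrightarrow> 0 < q \<Longrightarrow> F q \<noteq> e" for q
    unfolding p_def using not_less_Least by blast
  then have inj: "inj_on F {..<p}"
    using inj_on_funpow_least[where f=m and n=p and s=e] p unfolding F_def by (simp add: lessThan_atLeast0)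
  have "F ` {..<p} = A"
  proof
    show "F ` {..<p} \<subseteq> A"
      unfolding F_def using funpow_in_invariant_set[OF maps e] by blast
    show "A \<subseteq> F ` {..<p}"
    proof
      fix a assume "a \<in> A"
      then obtain k where "F k = a"
        using orbit e unfolding F_def by blast
      moreover have "F (k mod p) = F k"
        using funpow_mod_eq[where f=m and n=p and x=e] p unfolding F_def by simp
      ultimately show "a \<in> F ` {..<p}"
        using p(1) by (metis image_eqI lessThan_iff mod_less_divisor)
    qed
  qed
  then have bij: "bij_betw F {..<p} A"
    using inj by (simp add: bij_betw_def)
  then have "card A = p"
    using bij_betw_same_card by fastforce
  with p bij show "(m ^^ card A) e = e" and "bij_betw (\<lambda>k. (m ^^ k) e) {..<card A} A"
    unfolding F_def by simp_all
qed

lemma sum_lessThan_index_times_shift: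
  fixes g :: "nat \<Rightarrow> 'a::comm_ring_1"
  shows "(\<Sum>i<d. of_nat i * g (Suc i)) = (\<Sum>i<d. of_nat i * g i) + of_nat d * g d - (\<Sum>i<d. g (Suc i))"
proof -
  have "(\<Sum>i<d. of_nat (Suc i) * g (Suc i) - of_nat i * g i) = of_nat d * g d"
    by (subst sum_lessThan_telescope) simp
  then show ?thesis
    by (simp add: sum_subtractf sum.distrib algebra_simps)
qed

lemma earlier_same_residue_iff:
  assumes "0 < (n::nat)"
  shows "(\<exists>k<t. Suc k mod n = Suc t mod n) \<longleftrightarrow> n \<le> t"
proof
  assume "\<exists>k<t. Suc k mod n = Suc t mod n"
  then obtain k where "k < t" "Suc k mod n = Suc t mod n"
    by blast
  show "n \<le> t"
  proof (rule ccontr)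
    assume "\<not> n \<le> t"
    then have "Suc k mod n = Suc k" "Suc t mod n = (if Suc t = n then 0 else Suc t)"
      using \<open>k < t\<close> by auto
    then show False
      using \<open>k < t\<close> \<open>Suc k mod n = Suc t mod n\<close> by (auto split: if_splits)
  qed
next
  assume "n \<le> t"
  then have "Suc t = Suc (t - n) + n"
    by simp
  then have "Suc (t - n) mod n = Suc t mod n"
    by (metis mod_add_self2)
  moreover have "t - n < t"
    using assms \<open>n \<le> t\<close> by simp
  ultimately show "\<exists>k<t. Suc k mod n = Suc t mod n"
    by blast
qed

lemma out_edges_eq_image: "out_edges E x = Pair x ` nbrs E x"
  unfolding out_edges_def nbrs_def by auto

lemma deg_eq_card_nbrs: "deg E x = card (nbrs E x)"
  unfolding deg_def out_edges_eq_image by (simp add: card_image inj_on_def)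

lemma sum_out_edges_snd: "(\<Sum>a\<in>out_edges E x. f (snd a)) = (\<Sum>y\<in>nbrs E x. f y)"
  unfolding out_edges_eq_image by (simp add: sum.reindex inj_on_def)

lemma srw_prob_nonneg: "0 \<le> srw_prob E r0 k y"
  by (induction k arbitrary: y) (auto intro!: sum_nonneg divide_nonneg_nonneg)

lemma srw_prob_transfer_along_path:
  assumes "symp E" "locally_finite E" "E\<^sup>*\<^sup>* a b"
  shows "\<exists>c>0. \<exists>j. \<forall>k. c * srw_prob E r0 k a \<le> srw_prob E r0 (k + j) b"
  using assms(3)
proof (induction rule: rtranclp_induct)
  case base
  show ?case
    by (intro exI[of _ 1] exI[of _ 0] conjI allI) simp_all
next
  case (step b b')
  then obtain c j where c: "c > 0" "\<And>k. c * srw_prob E r0 k a \<le> srw_prob E r0 (k + j) b"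
    by blast
  have fin: "finite (nbrs E b')" "finite (nbrs E b)"
    using assms(2) unfolding locally_finite_def by blast+
  have "b' \<in> nbrs E b" "b \<in> nbrs E b'"
    using step(2) assms(1) unfolding nbrs_def by (auto dest: sympD)
  then have deg: "real (deg E b) > 0"
    using fin unfolding deg_eq_card_nbrs by (auto simp: card_gt_0_iff)
  have one_step: "srw_prob E r0 k b / real (deg E b) \<le> srw_prob E r0 (Suc k) b'" for k
    using member_le_sum[OF \<open>b \<in> nbrs E b'\<close> _ fin(1), of "\<lambda>x. srw_prob E r0 k x / real (deg E x)"]
    by (simp add: srw_prob_nonneg)
  show ?case
  proof (intro exI[of _ "c / real (deg E b)"] exI[of _ "Suc j"] conjI allI)
    show "0 < c / real (deg E b)"
      using c deg by simp
    fix k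
    have "c / real (deg E b) * srw_prob E r0 k a \<le> srw_prob E r0 (k + j) b / real (deg E b)"
      using c(2)[of k] deg by (simp add: divide_right_mono)
    also have "\<dots> \<le> srw_prob E r0 (k + Suc j) b'"
      using one_step[of "k + j"] by simp
    finally show "c / real (deg E b) * srw_prob E r0 k a \<le> srw_prob E r0 (k + Suc j) b'" .
  qed
qed

lemma summable_srw_prob:
  assumes "symp E" "locally_finite E" "connected_graph E" "transient E r0"
  shows "summable (\<lambda>k. srw_prob E r0 k y)"
proof -
  have "E\<^sup>*\<^sup>* y r0"
    using assms(3) unfolding connected_graph_def by blast
  then obtain c j where c: "c > 0" "\<And>k. c * srw_prob E r0 k y \<le> srw_prob E r0 (k + j) r0"
    using srw_prob_transfer_along_path[OF assms(1,2)] by blast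
  have "summable (\<lambda>k. srw_prob E r0 (k + j) r0 / c)"
    using assms(4) summable_iff_shift[of "\<lambda>k. srw_prob E r0 k r0" j]
    unfolding transient_def by (simp add: summable_divide)
  then show ?thesis
  proof (rule summable_comparison_test')
    fix k
    show "norm (srw_prob E r0 k y) \<le> srw_prob E r0 (k + j) r0 / c"
      using c srw_prob_nonneg[of E r0 k y] by (simp add: pos_le_divide_eq mult.commute)
  qed
qed

definition normalized_green :: "('v \<Rightarrow> 'v \<Rightarrow> bool) \<Rightarrow> 'v \<Rightarrow> 'v \<Rightarrow> real" where
  "normalized_green E r0 y = green E r0 y / real (deg E y)"

lemma green_harmonic:
  assumes "symp E" "locally_finite E" "connected_graph E" "transient E r0"
  shows "green E r0 y = of_bool (y = r0) + (\<Sum>x\<in>nbrs E y. normalized_green E r0 x)"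
proof -
  note summable = summable_srw_prob[OF assms]
  have "finite (nbrs E y)"
    using assms(2) unfolding locally_finite_def by blast
  have "green E r0 y = srw_prob E r0 0 y + (\<Sum>k. srw_prob E r0 (Suc k) y)"
    unfolding green_def using suminf_split_head[OF summable] by simp
  also have "(\<Sum>k. srw_prob E r0 (Suc k) y) = (\<Sum>x\<in>nbrs E y. \<Sum>k. srw_prob E r0 k x / real (deg E x))"
    by (simp add: suminf_sum summable_divide summable)
  also have "\<dots> = (\<Sum>x\<in>nbrs E y. normalized_green E r0 x)"
    unfolding normalized_green_def green_def by (simp add: suminf_divide summable)
  finally show ?thesis
    by simp
qed

lemma weight_rotate:
  assumes "rotor_mechanism E m" and e: "e \<in> out_edges E x"
  shows "weight E r0 m (m e) - weight E r0 m e
    = (\<Sum>y\<in>nbrs E x. normalized_green E r0 y) / real (deg E x) - normalized_green E r0 (snd (m e))"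
proof -
  \<comment> \<open>Passing from e to m e shifts the summation index by one; since m has period deg x on
    out_edges E x, the discrepancy is a full orbit sum minus the one wrapped-around term.\<close>
  define d where "d = deg E x"
  define g where "g k = normalized_green E r0 (snd ((m ^^ k) e))" for k
  have maps: "m ` out_edges E x \<subseteq> out_edges E x"
    and orbit: "\<forall>a\<in>out_edges E x. \<forall>b\<in>out_edges E x. \<exists>k. (m ^^ k) a = b"
    using assms(1) unfolding rotor_mechanism_def by (auto dest: bij_betw_imp_surj_on)
  note cycle = single_orbit_funpow[OF maps orbit, unfolded deg_def[symmetric]]
  have "m e \<in> out_edges E x" "m (m e) \<in> out_edges E x"
    using maps e by auto
  have "d > 0"
    using cycle(2)[OF e] e unfolding d_def by (auto simp: bij_betw_def)
  have "g (Suc d) = g 1"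
    using cycle(1)[OF \<open>m e \<in> out_edges E x\<close>] unfolding g_def d_def by (simp add: funpow_swap1)
  have orbit_sum: "(\<Sum>i<d. g (Suc (Suc i))) = (\<Sum>y\<in>nbrs E x. normalized_green E r0 y)"
    using sum.reindex_bij_betw[OF cycle(2)[OF \<open>m (m e) \<in> out_edges E x\<close>], of "\<lambda>a. normalized_green E r0 (snd a)"]
    unfolding g_def d_def sum_out_edges_snd by (simp add: funpow_swap1)
  have "fst e = x" "fst (m e) = x"
    using e \<open>m e \<in> out_edges E x\<close> unfolding out_edges_def by auto
  then have "weight E r0 m e = -1 / d * (\<Sum>i<d. real i * g (Suc i))"
    and "weight E r0 m (m e) = -1 / d * (\<Sum>i<d. real i * g (Suc (Suc i)))"
    unfolding weight_def g_def d_def normalized_green_def by (simp_all add: funpow_swap1)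
  moreover have "(\<Sum>i<d. real i * g (Suc (Suc i))) = (\<Sum>i<d. real i * g (Suc i)) + d * g (Suc d) - (\<Sum>i<d. g (Suc (Suc i)))"
    using sum_lessThan_index_times_shift[of "\<lambda>i. g (Suc i)" d] by simp
  ultimately show ?thesis
    using \<open>d > 0\<close> \<open>g (Suc d) = g 1\<close> orbit_sum unfolding d_def g_def by (simp add: field_simps)
qed

lemma length_exp_hist: "length (exp_hist m r0 \<rho> n t) = Suc t"
  by (induction t) auto

lemma exp_hist_nth_stable: "s \<le> t \<Longrightarrow> exp_hist m r0 \<rho> n t ! s = exp_hist m r0 \<rho> n s ! s"
  by (induction t) (auto simp: nth_append length_exp_hist le_Suc_eq)

lemma exp_hist_current: "exp_hist m r0 \<rho> n t ! t = (pos m r0 \<rho> n t, rot m r0 \<rho> n t)"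
  unfolding pos_def[abs_def] rot_def by simp

locale rotor_walk =
  fixes E :: "'v \<Rightarrow> 'v \<Rightarrow> bool" and r0 :: 'v
    and m :: "'v \<times> 'v \<Rightarrow> 'v \<times> 'v" and \<rho> :: "'v \<Rightarrow> 'v \<times> 'v" and n :: nat
  assumes loop_free: "\<not> E x x"
    and mechanism: "rotor_mechanism E m"
    and config: "rotor_config E \<rho>"
    and n_pos: "n \<ge> 1"
begin

abbreviation "X \<equiv> pos m r0 \<rho> n"
abbreviation "rotor \<equiv> rot m r0 \<rho> n"
abbreviation "R \<equiv> range_set m r0 \<rho> n"
abbreviation "mover t \<equiv> Suc t mod n"

definition returned :: "nat \<Rightarrow> nat \<Rightarrow> bool" where
  "returned t i \<longleftrightarrow> X t i = r0 \<and> (\<exists>s<t. X s i \<noteq> r0)"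

lemma X_0: "X 0 = (\<lambda>_. r0)" and rotor_0: "rotor 0 = \<rho>"
  by (auto simp: pos_def rot_def)

lemma X_rotor_Suc:
  "X (Suc t) = (if returned t (mover t) then X t
                else (X t)(mover t := snd (m (rotor t (X t (mover t))))))"
  "rotor (Suc t) = (if returned t (mover t) then rotor t
                    else (rotor t)(X t (mover t) := m (rotor t (X t (mover t)))))"
proof -
  have "fst (exp_hist m r0 \<rho> n t ! s) = X s" if "s < t" for s
    using exp_hist_nth_stable[of s t m r0 \<rho> n] that unfolding pos_def[abs_def] by simp
  then have past: "(\<exists>s<t. fst (exp_hist m r0 \<rho> n t ! s) i \<noteq> r0) \<longleftrightarrow> (\<exists>s<t. X s i \<noteq> r0)" for i
    by auto
  have "(X (Suc t), rotor (Suc t)) = exp_step m r0 n (exp_hist m r0 \<rho> n t) t"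
    using exp_hist_current[of m r0 \<rho> n "Suc t"] by (simp add: nth_append length_exp_hist)
  also have "\<dots> = (if returned t (mover t) then (X t, rotor t)
      else ((X t)(mover t := snd (m (rotor t (X t (mover t))))),
            (rotor t)(X t (mover t) := m (rotor t (X t (mover t))))))"
    unfolding exp_step_def exp_hist_current past returned_def by (auto simp: Let_def)
  finally have "(X (Suc t), rotor (Suc t)) = \<dots>" .
  then show "X (Suc t) = (if returned t (mover t) then X t
                else (X t)(mover t := snd (m (rotor t (X t (mover t))))))"
    and "rotor (Suc t) = (if returned t (mover t) then rotor t
                    else (rotor t)(X t (mover t) := m (rotor t (X t (mover t)))))"
    by (simp_all split: if_splits)
qed

lemma rotate_in_out_edges: "a \<in> out_edges E x \<Longrightarrow> m a \<in> out_edges E x"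
  using mechanism unfolding rotor_mechanism_def by (meson bij_betwE)

lemma rotor_in_out_edges: "rotor t x \<in> out_edges E x"
proof (induction t arbitrary: x)
  case 0
  then show ?case
    using config unfolding rotor_config_def rotor_0 by blast
next
  case (Suc t)
  then show ?case
    using rotate_in_out_edges unfolding X_rotor_Suc by auto
qed

lemma active_particle_moves:
  assumes "\<not> returned t (mover t)"
  shows "X (Suc t) (mover t) \<noteq> X t (mover t)"
proof -
  have "m (rotor t (X t (mover t))) \<in> out_edges E (X t (mover t))"
    using rotate_in_out_edges rotor_in_out_edges by blast
  then have "E (X t (mover t)) (X (Suc t) (mover t))"
    using assms unfolding X_rotor_Suc by (auto simp: out_edges_def)
  then show ?thesis
    using loop_free by metis
qed

lemma X_before_first_turn: "(\<forall>k<s. mover k \<noteq> i) \<Longrightarrow> X s i = r0"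
  by (induction s) (auto simp: X_0 X_rotor_Suc)

lemma X_leaves_root: "(\<exists>k<t. mover k = i) \<Longrightarrow> \<exists>s\<le>t. X s i \<noteq> r0"
proof (induction t)
  case (Suc t)
  show ?case
  proof (cases "\<exists>k<t. mover k = i")
    case True
    then show ?thesis
      using Suc.IH le_SucI by blast
  next
    case False
    then have i: "i = mover t"
      using Suc.prems less_Suc_eq by auto
    have "X t i = r0" "\<not> returned t i"
      using X_before_first_turn False unfolding returned_def by auto
    then show ?thesis
      using active_particle_moves unfolding i by (metis order_refl)
  qed
qed simp

lemma returned_imp_late: "returned t (mover t) \<Longrightarrow> n \<le> t"
proof -
  assume "returned t (mover t)"
  then obtain s where "s < t" "X s (mover t) \<noteq> r0"
    unfolding returned_def by blast
  then have "\<exists>k<t. mover k = mover t"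
    using X_before_first_turn by (meson order.strict_trans)
  then show "n \<le> t"
    using earlier_same_residue_iff n_pos by simp
qed

lemma mover_at_root_iff: "\<not> returned t (mover t) \<Longrightarrow> X t (mover t) = r0 \<longleftrightarrow> t < n"
proof
  assume "\<not> returned t (mover t)" "X t (mover t) = r0"
  then have "\<forall>s<t. X s (mover t) = r0"
    unfolding returned_def by blast
  then have "\<not> (\<exists>k<t. mover k = mover t)"
    using X_leaves_root[of t "mover t"] \<open>X t (mover t) = r0\<close> by (metis le_neq_implies_less)
  then show "t < n"
    using earlier_same_residue_iff n_pos by (simp add: not_le)
next
  assume "t < n"
  then have "\<not> (\<exists>k<t. mover k = mover t)"
    using earlier_same_residue_iff n_pos by simp
  then show "X t (mover t) = r0"
    using X_before_first_turn by blast
qed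

lemma X_in_range_set: "i < n \<Longrightarrow> s \<le> t \<Longrightarrow> X s i \<in> R t"
  unfolding range_set_def by blast

lemma range_set_Suc: "R (Suc t) = insert (X (Suc t) (mover t)) (R t)"
proof -
  have "R (Suc t) = R t \<union> X (Suc t) ` {..<n}"
    unfolding range_set_def by (auto simp: le_Suc_eq)
  moreover have "X (Suc t) j \<in> R t" if "j \<noteq> mover t" "j < n" for j
    using that X_in_range_set[of j t t] unfolding X_rotor_Suc by simp
  moreover have "mover t < n"
    using n_pos by simp
  ultimately show ?thesis
    by (auto simp: image_iff) (metis lessThan_iff)
qed

lemma finite_range_set: "finite (R t)"
proof -
  have "R t = (\<lambda>(i, s). X s i) ` ({..<n} \<times> {..t})"
    unfolding range_set_def by force
  then show ?thesis
    by simp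
qed

lemma rotor_outside_range_set: "x \<notin> R t \<Longrightarrow> rotor t x = \<rho> x"
proof (induction t)
  case 0
  then show ?case
    by (simp add: rotor_0)
next
  case (Suc t)
  then have "x \<notin> R t" "x \<noteq> X t (mover t)"
    using range_set_Suc X_in_range_set[of "mover t" t t] n_pos by auto
  then show ?case
    using Suc.IH unfolding X_rotor_Suc by simp
qed


abbreviation "M \<equiv> M_val E m r0 \<rho> n"
abbreviation "h \<equiv> normalized_green E r0"

lemma M_val_eq:
  "M t = (\<Sum>i<n. h (X t i)) + real (min t n) / real (deg E r0)
    + (\<Sum>x\<in>R t. weight E r0 m (rotor t x) - weight E r0 m (\<rho> x))"
  unfolding M_val_def normalized_green_def ..

lemma M_val_0: "M 0 = real n * h r0"
  unfolding M_val_eq X_0 rotor_0 by simp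

lemma M_val_Suc_returned: "returned t (mover t) \<Longrightarrow> M (Suc t) = M t"
proof -
  assume "returned t (mover t)"
  then have "n \<le> t" "X (Suc t) = X t" "rotor (Suc t) = rotor t"
    using returned_imp_late X_rotor_Suc by auto
  moreover have "R (Suc t) = R t"
    using range_set_Suc[of t] X_in_range_set[of _ t t] n_pos \<open>X (Suc t) = X t\<close> by auto
  ultimately show "M (Suc t) = M t"
    unfolding M_val_eq by simp
qed

lemma M_val_Suc_active:
  assumes "\<not> returned t (mover t)"
  defines "x \<equiv> X t (mover t)"
  shows "M (Suc t) = M t + (\<Sum>y\<in>nbrs E x. h y) / real (deg E x) - h x
    + of_bool (t < n) / real (deg E r0)"
proof -
  define e where "e = rotor t x"
  define y where "y = snd (m e)"
  have "mover t < n"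
    using n_pos by simp
  have X_Suc: "X (Suc t) = (X t)(mover t := y)" and rotor_Suc: "rotor (Suc t) = (rotor t)(x := m e)"
    using assms unfolding X_rotor_Suc x_def e_def y_def by simp_all
  have "e \<in> out_edges E x"
    unfolding e_def by (rule rotor_in_out_edges)
  have "y \<noteq> x"
    using active_particle_moves[OF assms(1)] X_Suc unfolding x_def by simp
  have "x \<in> R t"
    unfolding x_def using X_in_range_set \<open>mover t < n\<close> by blast
  have R_Suc: "R (Suc t) = insert y (R t)"
    using range_set_Suc[of t] unfolding X_Suc by simp
  have positions: "(\<Sum>i<n. h (X (Suc t) i)) = (\<Sum>i<n. h (X t i)) - h x + h y"
    using sum_fun_upd_eq[of "{..<n}" "mover t" "\<lambda>_. h" "X t" y] \<open>mover t < n\<close>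
    unfolding X_Suc x_def by simp
  define \<phi> where "\<phi> z a = weight E r0 m a - weight E r0 m (\<rho> z)" for z a
  have "\<phi> y (((rotor t)(x := m e)) y) = 0" if "y \<notin> R t"
    using that \<open>y \<noteq> x\<close> rotor_outside_range_set unfolding \<phi>_def by simp
  then have "(\<Sum>z\<in>R (Suc t). \<phi> z (rotor (Suc t) z)) = (\<Sum>z\<in>R t. \<phi> z (((rotor t)(x := m e)) z))"
    unfolding R_Suc rotor_Suc using finite_range_set by (cases "y \<in> R t") (simp_all add: insert_absorb)
  also have "\<dots> = (\<Sum>z\<in>R t. \<phi> z (rotor t z)) + (weight E r0 m (m e) - weight E r0 m e)"
    using sum_fun_upd_eq[OF finite_range_set \<open>x \<in> R t\<close>, of \<phi> "rotor t" "m e"]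
    unfolding \<phi>_def e_def by simp
  finally have rotors: "(\<Sum>z\<in>R (Suc t). \<phi> z (rotor (Suc t) z))
      = (\<Sum>z\<in>R t. \<phi> z (rotor t z)) + (\<Sum>y\<in>nbrs E x. h y) / real (deg E x) - h y"
    using weight_rotate[OF mechanism \<open>e \<in> out_edges E x\<close>] unfolding y_def by simp
  have "real (min (Suc t) n) = real (min t n) + of_bool (t < n)"
    by simp
  then show ?thesis
    using positions rotors unfolding M_val_eq \<phi>_def by (simp add: add_divide_distrib)
qed

lemma M_val_Suc:
  assumes harmonic: "\<And>y. green E r0 y = of_bool (y = r0) + (\<Sum>x\<in>nbrs E y. h x)"
  shows "M (Suc t) = M t"
proof (cases "returned t (mover t)")
  case True
  then show ?thesis
    by (rule M_val_Suc_returned)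
next
  case False
  define x where "x = X t (mover t)"
  have "h x = (\<Sum>y\<in>nbrs E x. h y) / real (deg E x) + of_bool (t < n) / real (deg E r0)"
    using harmonic[of x] mover_at_root_iff[OF False]
    unfolding normalized_green_def x_def by (auto simp: add_divide_distrib)
  then show ?thesis
    using M_val_Suc_active[OF False] unfolding x_def by simp
qed

end

theorem proposition2p1:
  fixes E :: "'v \<Rightarrow> 'v \<Rightarrow> bool" and r0 :: 'v
    and m :: "'v \<times> 'v \<Rightarrow> 'v \<times> 'v" and \<rho> :: "'v \<Rightarrow> 'v \<times> 'v" and n t :: nat
  assumes "simple_graph E" and "locally_finite E" and "connected_graph E"
    and "transient E r0"
    and "rotor_mechanism E m"
    and "rotor_config E \<rho>"
    and "n \<ge> 1"
  shows "M_val E m r0 \<rho> n t = real n * green E r0 r0 / real (deg E r0)"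
proof -
  interpret rotor_walk E r0 m \<rho> n
    using assms unfolding simple_graph_def by unfold_locales auto
  have "symp E"
    using assms(1) unfolding simple_graph_def by (simp add: symp_def)
  note harmonic = green_harmonic[OF this assms(2-4)]
  have "M t = M 0"
    by (induction t) (simp_all add: M_val_Suc harmonic)
  then show ?thesis
    using M_val_0 unfolding normalized_green_def by simp
qed

end
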